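(* Let $\mathbf{P}=\{p_n(x)\}_{n\ge0}$ be a sequence of complex polynomials with $\deg p_n=n$, $p_0=1$, and let $\bar{\mathbf{P}}=\{\bar p_n(x)\}$ with $\bar p_0(x)=1$, $\bar p_n(x)=xp_{n-1}(x)$ for $n\ge1$. Then for all $n\ge0$, $$A_{n+1}(x;\bar{\mathbf{P}})=(1+nx)A_n(x;\mathbf{P})+x(1-x)A_n'(x;\mathbf{P}),$$ where $'$ denotes the derivative in $x$.
   Context: For any sequence $\mathbf{Q}=\{q_n\}$ with $\deg q_n=n$, $q_0=1$, the Eulerian numbers $A_{n,k}(\mathbf{Q})$ ($0\le k\le n$) are the unique coefficients with $q_n(x)=\sum_{k=0}^{n}A_{n,k}(\mathbf{Q})\binom{x+n-k-1}{n}$, where $\binom{y}{n}=y(y-1)\cdots(y-n+1)/n!$, and $A_n(x;\mathbf{Q})=\sum_{k=0}^n A_{n,k}(\mathbf{Q})x^k$. *)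

theory Defs
  imports Complex_Main "HOL-Computational_Algebra.Polynomial"
begin

definition binom_poly :: "complex \<Rightarrow> nat \<Rightarrow> complex poly" where
  "binom_poly a n = smult (1 / of_nat (fact n)) (\<Prod>i<n. [:a - of_nat i, 1:])"

definition eulerian_num :: "(nat \<Rightarrow> complex poly) \<Rightarrow> nat \<Rightarrow> nat \<Rightarrow> complex" where
  "eulerian_num Q n = (THE A. (\<forall>k>n. A k = 0) \<and>
      Q n = (\<Sum>k\<le>n. smult (A k) (binom_poly (of_int (int n - int k - 1)) n)))"

definition eulerian_poly :: "(nat \<Rightarrow> complex poly) \<Rightarrow> nat \<Rightarrow> complex poly" where
  "eulerian_poly Q n = (\<Sum>k\<le>n. monom (eulerian_num Q n k) k)"

end

theory Submission
  imports Defs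
begin

text \<open>The polynomials \<open>B(n,k) = binom(x+n-k-1, n)\<close>, \<open>k \<le> n\<close>, form a basis of the
  polynomials of degree at most \<open>n\<close>: evaluated at \<open>1, \<dots>, n+1\<close> they give a unitriangular
  matrix. Record the coordinates of an expansion in this basis as the coefficients of a polynomial
  \<open>E\<close>, which is then the Eulerian polynomial. Pascal's rule
  \<open>B(n,k) = B(n+1,k) - B(n+1,k+1)\<close> shows that re-expanding in degree \<open>n+1\<close> multiplies \<open>E\<close>
  by \<open>1 - x\<close>, and \<open>x B(n,k) = (k+1) B(n+1,k) + (n-k) B(n+1,k+1)\<close> shows that multiplying the
  expanded polynomial by \<open>x\<close> replaces \<open>E\<close> by \<open>(1+nx) E + x(1-x) E'\<close>. Applied to \<open>p\<^sub>n\<close>,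
  whose multiple by \<open>x\<close> is the next member of the shifted sequence, this is the theorem.\<close>

lemma binom_poly_Suc:
  "smult (of_nat (Suc n)) (binom_poly a (Suc n)) = [:a - of_nat n, 1:] * binom_poly a n"
proof -
  have "binom_poly a (Suc n) =
      smult (1 / fact (Suc n)) ([:a - of_nat n, 1:] * (\<Prod>i<n. [:a - of_nat i, 1:]))"
    unfolding binom_poly_def by (simp only: prod.lessThan_Suc) (simp add: algebra_simps)
  moreover have "of_nat (Suc n) / fact (Suc n) = (1 / fact n :: complex)"
    by (simp add: fact_Suc del: of_nat_Suc)
  ultimately show ?thesis
    by (simp add: binom_poly_def mult_smult_right del: of_nat_Suc)
qed

lemma binom_poly_Suc_shift:
  "smult (of_nat (Suc n)) (binom_poly (a + 1) (Suc n)) = [:a + 1, 1:] * binom_poly a n"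
proof -
  have "binom_poly (a + 1) (Suc n) =
      smult (1 / fact (Suc n)) ([:a + 1, 1:] * (\<Prod>i<n. [:a - of_nat i, 1:]))"
    unfolding binom_poly_def by (simp only: prod.lessThan_Suc_shift) (simp add: algebra_simps)
  moreover have "of_nat (Suc n) / fact (Suc n) = (1 / fact n :: complex)"
    by (simp add: fact_Suc del: of_nat_Suc)
  ultimately show ?thesis
    by (simp add: binom_poly_def mult_smult_right del: of_nat_Suc)
qed

lemma binom_poly_pascal:
  "binom_poly a n = binom_poly (a + 1) (Suc n) - binom_poly a (Suc n)"
proof (rule smult_cancel)
  show "of_nat (Suc n) \<noteq> (0::complex)" by (rule of_nat_neq_0)
  have "smult (of_nat (Suc n)) (binom_poly (a + 1) (Suc n) - binom_poly a (Suc n))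
      = ([:a + 1, 1:] - [:a - of_nat n, 1:]) * binom_poly a n"
    by (simp only: smult_diff_right binom_poly_Suc_shift)
       (simp only: binom_poly_Suc left_diff_distrib)
  also have "[:a + 1, 1:] - [:a - of_nat n, 1:] = [:of_nat (Suc n):]"
    by simp
  finally show "smult (of_nat (Suc n)) (binom_poly a n) =
        smult (of_nat (Suc n)) (binom_poly (a + 1) (Suc n) - binom_poly a (Suc n))"
    by simp
qed

lemma binom_poly_times_x:
  "[:0, 1:] * binom_poly a n =
   smult (of_nat n - a) (binom_poly (a + 1) (Suc n)) + smult (a + 1) (binom_poly a (Suc n))"
proof (rule smult_cancel)
  show "of_nat (Suc n) \<noteq> (0::complex)" by (rule of_nat_neq_0)
  have "smult (of_nat (Suc n))
      (smult (of_nat n - a) (binom_poly (a + 1) (Suc n)) + smult (a + 1) (binom_poly a (Suc n)))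
      = (smult (of_nat n - a) [:a + 1, 1:] + smult (a + 1) [:a - of_nat n, 1:]) * binom_poly a n"
  proof -
    have "smult (of_nat (Suc n)) (smult (of_nat n - a) (binom_poly (a + 1) (Suc n))
          + smult (a + 1) (binom_poly a (Suc n)))
        = smult (of_nat n - a) (smult (of_nat (Suc n)) (binom_poly (a + 1) (Suc n)))
          + smult (a + 1) (smult (of_nat (Suc n)) (binom_poly a (Suc n)))"
      by (simp add: smult_add_right mult.commute)
    then show ?thesis
      by (simp only: binom_poly_Suc_shift binom_poly_Suc[of n a] distrib_right mult_smult_left)
  qed
  also have "smult (of_nat n - a) [:a + 1, 1:] + smult (a + 1) [:a - of_nat n, 1:] =
      smult (of_nat (Suc n)) [:0, 1:]"
    by (simp add: algebra_simps)
  finally show "smult (of_nat (Suc n)) ([:0, 1:] * binom_poly a n) = smult (of_nat (Suc n))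
     (smult (of_nat n - a) (binom_poly (a + 1) (Suc n)) + smult (a + 1) (binom_poly a (Suc n)))"
    by (simp add: mult_smult_left)
qed

lemma poly_binom_poly: "poly (binom_poly a n) x = (\<Prod>i<n. x + a - of_nat i) / fact n"
  by (simp add: binom_poly_def poly_prod algebra_simps)

definition eulerian_basis :: "nat \<Rightarrow> nat \<Rightarrow> complex poly" where
  "eulerian_basis n k = binom_poly (of_int (int n - int k - 1)) n"

lemma eulerian_basis_as_binom_poly:
  fixes n k :: nat
  defines "a \<equiv> of_int (int n - int k - 1)"
  shows "eulerian_basis n k = binom_poly a n"
    and "eulerian_basis (Suc n) k = binom_poly (a + 1) (Suc n)"
    and "eulerian_basis (Suc n) (Suc k) = binom_poly a (Suc n)"
  unfolding a_def eulerian_basis_def by (simp_all add: algebra_simps)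

lemma eulerian_basis_pascal:
  "eulerian_basis n k = eulerian_basis (Suc n) k - eulerian_basis (Suc n) (Suc k)"
  unfolding eulerian_basis_as_binom_poly[of n k] by (rule binom_poly_pascal)

lemma eulerian_basis_times_x:
  "[:0, 1:] * eulerian_basis n k =
   smult (of_nat (Suc k)) (eulerian_basis (Suc n) k)
   + smult (of_nat n - of_nat k) (eulerian_basis (Suc n) (Suc k))"
proof -
  define a :: complex where "a = of_int (int n - int k - 1)"
  have "of_nat (Suc k) = of_nat n - a" "of_nat n - of_nat k = a + 1"
    unfolding a_def by simp_all
  then show ?thesis
    unfolding eulerian_basis_as_binom_poly[of n k] a_def[symmetric] binom_poly_times_x
    by (simp only:)
qed

lemma poly_eulerian_basis_below:
  assumes "k \<le> n" "j < k"
  shows "poly (eulerian_basis n k) (of_nat (Suc j)) = 0"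
proof -
  have "n + j - k \<in> {..<n}" and
    "of_nat (Suc j) + of_int (int n - int k - 1) - of_nat (n + j - k) = (0::complex)"
    using assms by (auto simp: of_nat_diff)
  then show ?thesis
    unfolding eulerian_basis_def poly_binom_poly
    by (metis divide_eq_0_iff finite_lessThan prod_zero_iff)
qed

lemma poly_eulerian_basis_diag:
  assumes "k \<le> n"
  shows "poly (eulerian_basis n k) (of_nat (Suc k)) = 1"
proof -
  have "(\<Prod>i<n. of_nat (Suc k) + of_int (int n - int k - 1) - of_nat i :: complex)
      = of_nat (\<Prod>i<n. n - i)"
    using assms by (simp add: of_nat_diff)
  also have "\<dots> = fact n"
    by (simp add: fact_prod_rev atLeast0LessThan)
  finally show ?thesis
    unfolding eulerian_basis_def poly_binom_poly by simp
qed

definition eulerian_expansion :: "nat \<Rightarrow> complex poly \<Rightarrow> complex poly" where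
  "eulerian_expansion n E = (\<Sum>k\<le>n. smult (coeff E k) (eulerian_basis n k))"

lemma eulerian_expansion_add:
  "eulerian_expansion n (E + F) = eulerian_expansion n E + eulerian_expansion n F"
  by (simp add: eulerian_expansion_def smult_add_left sum.distrib)

lemma eulerian_expansion_diff:
  "eulerian_expansion n (E - F) = eulerian_expansion n E - eulerian_expansion n F"
  by (simp add: eulerian_expansion_def smult_diff_left sum_subtractf)

lemma eulerian_expansion_eq_0_iff:
  assumes "degree E \<le> n"
  shows "eulerian_expansion n E = 0 \<longleftrightarrow> E = 0"
proof
  assume zero: "eulerian_expansion n E = 0"
  have "coeff E j = 0" for j
  proof (induction j rule: less_induct)
    case (less j)
    show ?case
    proof (cases "j \<le> n")
      case False
      then show ?thesis using assms by (simp add: coeff_eq_0)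
    next
      case True
      have "0 = poly (eulerian_expansion n E) (of_nat (Suc j))"
        using zero by simp
      also have "\<dots> = (\<Sum>k\<le>n. coeff E k * poly (eulerian_basis n k) (of_nat (Suc j)))"
        by (simp add: eulerian_expansion_def poly_sum del: of_nat_Suc)
      also have "\<dots> = (\<Sum>k\<in>{j}. coeff E k * poly (eulerian_basis n k) (of_nat (Suc j)))"
      proof (rule sum.mono_neutral_right)
        show "\<forall>k\<in>{..n} - {j}. coeff E k * poly (eulerian_basis n k) (of_nat (Suc j)) = 0"
          using less poly_eulerian_basis_below by (auto simp: nat_neq_iff)
      qed (use True in auto)
      also have "\<dots> = coeff E j"
        using poly_eulerian_basis_diag[OF True] by simp
      finally show ?thesis by simp
    qed
  qed
  then show "E = 0" by (simp add: poly_eq_iff)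
qed (simp add: eulerian_expansion_def)

lemma sum_atMost_Suc_coeff:
  assumes "degree E \<le> n" "\<And>k. f 0 k = 0"
  shows "(\<Sum>k\<le>Suc n. f (coeff E k) k) = (\<Sum>k\<le>n. f (coeff E k) k)"
  using assms by (simp add: coeff_eq_0)

lemma sum_atMost_Suc_coeff_pCons:
  assumes "\<And>k. f 0 k = 0"
  shows "(\<Sum>k\<le>Suc n. f (coeff (pCons 0 E) k) k) = (\<Sum>k\<le>n. f (coeff E k) (Suc k))"
  unfolding sum.atMost_Suc_shift using assms by simp

definition eulerian_operator :: "nat \<Rightarrow> 'a::idom poly \<Rightarrow> 'a poly" where
  "eulerian_operator n E = [:1, of_nat n:] * E + [:0, 1:] * [:1, -1:] * pderiv E"

lemma coeff_eulerian_operator: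
  fixes E :: "'a::idom poly"
  shows "coeff (eulerian_operator n E) k =
   of_nat (Suc k) * coeff E k + (of_nat (Suc n) - of_nat k) * coeff (pCons 0 E) k"
proof -
  have "eulerian_operator n E =
      E + smult (of_nat n) (pCons 0 E) + pCons 0 (pderiv E) - pCons 0 (pCons 0 (pderiv E))"
    by (simp add: eulerian_operator_def algebra_simps)
  moreover have "coeff (E + smult (of_nat n) (pCons 0 E) + pCons 0 (pderiv E)
      - pCons 0 (pCons 0 (pderiv E))) k =
    of_nat (Suc k) * coeff E k + (of_nat (Suc n) - of_nat k) * coeff (pCons 0 E) k"
  proof (cases k)
    case (Suc j)
    then show ?thesis by (cases j) (simp_all add: coeff_pderiv algebra_simps)
  qed simp
  ultimately show ?thesis by (simp only:)
qed

lemma degree_eulerian_operator: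
  fixes E :: "'a::idom poly"
  assumes "degree E \<le> n"
  shows "degree (eulerian_operator n E) \<le> Suc n"
proof (rule degree_le)
  show "\<forall>k>Suc n. coeff (eulerian_operator n E) k = 0"
    unfolding coeff_eulerian_operator using assms
    by (auto simp: coeff_pCons coeff_eq_0 split: nat.split)
qed

lemma eulerian_expansion_times_x:
  fixes E :: "complex poly"
  assumes "degree E \<le> n"
  shows "[:0, 1:] * eulerian_expansion n E =
    eulerian_expansion (Suc n) (eulerian_operator n E)"
proof -
  have "[:0, 1:] * eulerian_expansion n E =
      (\<Sum>k\<le>n. smult (coeff E k * of_nat (Suc k)) (eulerian_basis (Suc n) k))
      + (\<Sum>k\<le>n. smult (coeff E k * (of_nat (Suc n) - of_nat (Suc k)))
          (eulerian_basis (Suc n) (Suc k)))"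
    unfolding eulerian_expansion_def sum_distrib_left mult_smult_right eulerian_basis_times_x
    by (simp add: smult_add_right sum.distrib)
  also have "\<dots> = (\<Sum>k\<le>Suc n. smult (coeff E k * of_nat (Suc k)) (eulerian_basis (Suc n) k))
      + (\<Sum>k\<le>Suc n. smult (coeff (pCons 0 E) k * (of_nat (Suc n) - of_nat k))
          (eulerian_basis (Suc n) k))"
    by (simp only: mult_zero_left smult_0_left
        sum_atMost_Suc_coeff[OF assms,
          where f = "\<lambda>c k. smult (c * of_nat (Suc k)) (eulerian_basis (Suc n) k)"]
        sum_atMost_Suc_coeff_pCons[
          where f = "\<lambda>c k. smult (c * (of_nat (Suc n) - of_nat k)) (eulerian_basis (Suc n) k)"])
  also have "\<dots> = eulerian_expansion (Suc n) (eulerian_operator n E)"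
    unfolding eulerian_expansion_def coeff_eulerian_operator
    by (simp add: smult_add_left sum.distrib mult.commute)
  finally show ?thesis .
qed

lemma coeff_one_minus_x_times:
  fixes E :: "'a::comm_ring_1 poly"
  shows "coeff ([:1, -1:] * E) k = coeff E k - coeff (pCons 0 E) k"
  by (simp add: coeff_pCons split: nat.split)

lemma degree_one_minus_x_times:
  fixes E :: "'a::idom poly"
  assumes "degree E \<le> n"
  shows "degree ([:1, -1:] * E) \<le> Suc n"
proof -
  have "degree ([:1, -1:] * E) \<le> degree [:1, -1::'a:] + degree E"
    by (rule degree_mult_le)
  moreover have "degree [:1, -1::'a:] = 1"
    by simp
  ultimately show ?thesis
    using assms by linarith
qed

lemma eulerian_expansion_lift:
  fixes E :: "complex poly"
  assumes "degree E \<le> n"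
  shows "eulerian_expansion n E = eulerian_expansion (Suc n) ([:1, -1:] * E)"
proof -
  have "eulerian_expansion n E =
      (\<Sum>k\<le>n. smult (coeff E k) (eulerian_basis (Suc n) k))
      - (\<Sum>k\<le>n. smult (coeff E k) (eulerian_basis (Suc n) (Suc k)))"
    unfolding eulerian_expansion_def eulerian_basis_pascal[of n]
    by (simp add: smult_diff_right sum_subtractf)
  also have "\<dots> = (\<Sum>k\<le>Suc n. smult (coeff E k) (eulerian_basis (Suc n) k))
      - (\<Sum>k\<le>Suc n. smult (coeff (pCons 0 E) k) (eulerian_basis (Suc n) k))"
    by (simp only: smult_0_left
        sum_atMost_Suc_coeff[OF assms, where f = "\<lambda>c k. smult c (eulerian_basis (Suc n) k)"]
        sum_atMost_Suc_coeff_pCons[where f = "\<lambda>c k. smult c (eulerian_basis (Suc n) k)"])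
  also have "\<dots> = eulerian_expansion (Suc n) ([:1, -1:] * E)"
    unfolding eulerian_expansion_def coeff_one_minus_x_times
    by (simp add: smult_diff_left sum_subtractf)
  finally show ?thesis .
qed

lemma eulerian_expansion_exists:
  fixes P :: "complex poly"
  assumes "degree P \<le> n"
  shows "\<exists>E. degree E \<le> n \<and> P = eulerian_expansion n E"
  using assms
proof (induction n arbitrary: P)
  case 0
  have "eulerian_basis 0 0 = 1"
    by (simp add: eulerian_basis_def binom_poly_def)
  then have "eulerian_expansion 0 P = P"
    using 0 by (simp add: eulerian_expansion_def degree_0_id)
  then show ?case
    using 0 by metis
next
  case (Suc n)
  obtain a q where P: "P = pCons a q"
    by (cases P)
  have "degree q \<le> n"
    using Suc.prems P by (cases "q = 0") auto
  then obtain B where B: "degree B \<le> n" "q = eulerian_expansion n B"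
    using Suc.IH by blast
  obtain C where C: "degree C \<le> n" "[:a:] = eulerian_expansion n C"
    using Suc.IH[of "[:a:]"] by auto
  define E where "E = [:1, -1:] * C + eulerian_operator n B"
  have "P = [:a:] + [:0, 1:] * q"
    using P by simp
  also have "\<dots> = eulerian_expansion (Suc n) ([:1, -1:] * C)
      + eulerian_expansion (Suc n) (eulerian_operator n B)"
    unfolding B(2) C(2) eulerian_expansion_lift[OF C(1)] eulerian_expansion_times_x[OF B(1)] ..
  also have "\<dots> = eulerian_expansion (Suc n) E"
    unfolding E_def by (rule eulerian_expansion_add[symmetric])
  finally have "P = eulerian_expansion (Suc n) E" .
  moreover have "degree E \<le> Suc n"
    unfolding E_def using degree_one_minus_x_times[OF C(1)] degree_eulerian_operator[OF B(1)]
    by (rule degree_add_le)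
  ultimately show ?case
    by blast
qed

lemma eulerian_poly_eqI:
  assumes "degree E \<le> n" "Q n = eulerian_expansion n E"
  shows "eulerian_poly Q n = E"
proof -
  have "eulerian_num Q n = coeff E"
    unfolding eulerian_num_def
  proof (rule the_equality)
    show "(\<forall>k>n. coeff E k = 0) \<and>
        Q n = (\<Sum>k\<le>n. smult (coeff E k) (binom_poly (of_int (int n - int k - 1)) n))"
      using assms by (simp add: coeff_eq_0 eulerian_expansion_def eulerian_basis_def)
  next
    fix A
    assume A: "(\<forall>k>n. A k = 0) \<and>
        Q n = (\<Sum>k\<le>n. smult (A k) (binom_poly (of_int (int n - int k - 1)) n))"
    define F where "F = (\<Sum>k\<le>n. monom (A k) k)"
    have coeff_F: "coeff F = A"
      using A by (auto simp: F_def coeff_sum coeff_monom)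
    then have "degree F \<le> n"
      using A by (auto intro: degree_le)
    moreover have "eulerian_expansion n F = eulerian_expansion n E"
      using A assms(2) coeff_F by (simp add: eulerian_expansion_def eulerian_basis_def)
    ultimately have "F = E"
      using assms(1) eulerian_expansion_eq_0_iff[of "F - E" n]
      by (simp add: eulerian_expansion_diff degree_diff_le)
    then show "A = coeff E"
      using coeff_F by simp
  qed
  then show ?thesis
    unfolding eulerian_poly_def using poly_as_sum_of_monoms'[OF assms(1)] by simp
qed

theorem theorem3p3:
  fixes p :: "nat \<Rightarrow> complex poly" and n :: nat
  assumes "\<And>m. degree (p m) = m"
    and "p 0 = 1"
  shows "eulerian_poly (\<lambda>m. if m = 0 then 1 else [:0, 1:] * p (m - 1)) (n + 1)
         = [:1, of_nat n:] * eulerian_poly p n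
           + [:0, 1:] * [:1, -1:] * pderiv (eulerian_poly p n)"
proof -
  \<comment> \<open>Only \<open>degree (p n) \<le> n\<close> is used.\<close>
  obtain E where E: "degree E \<le> n" "p n = eulerian_expansion n E"
    using eulerian_expansion_exists[of "p n" n] assms(1) by auto
  have "eulerian_poly p n = E"
    using E by (rule eulerian_poly_eqI)
  moreover have "eulerian_poly (\<lambda>m. if m = 0 then 1 else [:0, 1:] * p (m - 1)) (n + 1)
      = eulerian_operator n E"
    using degree_eulerian_operator[OF E(1)] eulerian_expansion_times_x[OF E(1)] E(2)
    by (intro eulerian_poly_eqI) simp_all
  ultimately show ?thesis
    by (simp add: eulerian_operator_def)
qed

end
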